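(* Let $T_l$ be a $2m$ deck-shuffler IET and $x\in[0,1)$. Then $x$ is periodic for $T_l$ with minimal period $n$ if and only if the sequence $\mathcal{H}_l(x)$ is periodic with minimal period $n$.
   Context: A $2m$ deck-shuffler IET $T_l$ is the map $[0,1)\to[0,1)$ determined by a length vector $l$ giving a partition of $[0,1)$ into consecutive left-closed right-open intervals $A_1<\dots<A_m<B_1<\dots<B_m$ of positive lengths, with $T_l(x)=x+|B_1|+\dots+|B_i|$ for $x\in A_i$ and $T_l(x)=x-|A_i|-\dots-|A_m|$ for $x\in B_i$. Let $B=B_1\cup\dots\cup B_m$. The coding $\mathcal{H}_l:[0,1)\to\{0,1\}^{\mathbb{Z}_{\ge0}}$ is $\mathcal{H}_l(x)=(\chi_B(T_l^n x))_{n\ge0}$; a sequence $(s_k)$ is periodic with minimal period $n$ if $s_{k+n}=s_k$ for all $k$ and $n$ is the least positive such integer. *)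

theory Defs
  imports Complex_Main
begin

text \<open>Length vector l: indices 0..<m are |A_1|..|A_m|, indices m..<2m are |B_1|..|B_m|.
  pt l i is the left endpoint of the i-th interval (0-based) in the order A_1<...<A_m<B_1<...<B_m.\<close>

definition pt :: "(nat \<Rightarrow> real) \<Rightarrow> nat \<Rightarrow> real" where
  "pt l i = (\<Sum>j<i. l j)"

definition ds_valid :: "nat \<Rightarrow> (nat \<Rightarrow> real) \<Rightarrow> bool" where
  "ds_valid m l \<longleftrightarrow> m \<ge> 1 \<and> (\<forall>i<2*m. l i > 0) \<and> (\<Sum>i<2*m. l i) = 1"

definition inA :: "nat \<Rightarrow> (nat \<Rightarrow> real) \<Rightarrow> real \<Rightarrow> nat \<Rightarrow> bool" where
  "inA m l x i \<longleftrightarrow> i < m \<and> pt l i \<le> x \<and> x < pt l (Suc i)"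

definition inB :: "nat \<Rightarrow> (nat \<Rightarrow> real) \<Rightarrow> real \<Rightarrow> nat \<Rightarrow> bool" where
  "inB m l x i \<longleftrightarrow> i < m \<and> pt l (m + i) \<le> x \<and> x < pt l (Suc (m + i))"

definition ds_T :: "nat \<Rightarrow> (nat \<Rightarrow> real) \<Rightarrow> real \<Rightarrow> real" where
  "ds_T m l x =
    (if \<exists>i. inA m l x i then x + (\<Sum>j\<le>(THE i. inA m l x i). l (m + j))
     else if \<exists>i. inB m l x i then x - (\<Sum>j\<in>{(THE i. inB m l x i)..<m}. l j)
     else x)"

definition Bset :: "nat \<Rightarrow> (nat \<Rightarrow> real) \<Rightarrow> real set" where
  "Bset m l = {x. \<exists>i. inB m l x i}"

definition coding :: "nat \<Rightarrow> (nat \<Rightarrow> real) \<Rightarrow> real \<Rightarrow> nat \<Rightarrow> nat" where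
  "coding m l x = (\<lambda>n. if (ds_T m l ^^ n) x \<in> Bset m l then 1 else 0)"

definition periodic_pt_min :: "(real \<Rightarrow> real) \<Rightarrow> real \<Rightarrow> nat \<Rightarrow> bool" where
  "periodic_pt_min T x n \<longleftrightarrow> 0 < n \<and> (T ^^ n) x = x \<and> (\<forall>k. 0 < k \<and> k < n \<longrightarrow> (T ^^ k) x \<noteq> x)"

definition periodic_seq_min :: "(nat \<Rightarrow> 'a) \<Rightarrow> nat \<Rightarrow> bool" where
  "periodic_seq_min s n \<longleftrightarrow> 0 < n \<and> (\<forall>k. s (k + n) = s k)
     \<and> (\<forall>p. 0 < p \<and> p < n \<longrightarrow> \<not> (\<forall>k. s (k + p) = s k))"

end

theory Submission
  imports Defs
begin

text \<open>On each of the two halves \<open>A = A\<^sub>1 \<union> ... \<union> A\<^sub>m\<close> and \<open>B\<close> the map \<open>T\<close> is strictly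
  increasing, so two points \<open>x < y\<close> with the same coding keep their order along their orbits.
  If the coding of \<open>x\<close> has period \<open>p\<close> but \<open>y = T\<^sup>p x \<noteq> x\<close>, then the points \<open>T\<^sup>j\<^sup>p x\<close> form a
  strictly monotone sequence in \<open>[0,1)\<close>. Its steps are displacements of \<open>T\<^sup>p\<close>, which take only
  finitely many values because \<open>T\<close> is a piecewise translation; a strictly monotone sequence
  with finitely many step sizes is unbounded, a contradiction. Conversely, the coding of
  \<open>T\<^sup>p x\<close> is the \<open>p\<close>-shift of the coding of \<open>x\<close>. So \<open>x\<close> and its coding have the same periods,
  hence the same minimal period.\<close>

lemma pt_0 [simp]: "pt l 0 = 0"
  by (simp add: pt_def)

lemma pt_Suc: "pt l (Suc i) = pt l i + l i"
  by (simp add: pt_def)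

lemma pt_2m: "ds_valid m l \<Longrightarrow> pt l (2 * m) = 1"
  by (simp add: ds_valid_def pt_def)

lemma pt_mono:
  assumes "ds_valid m l" "i \<le> j" "j \<le> 2 * m"
  shows "pt l i \<le> pt l j"
  using assms(2,3)
proof (induction j)
  case (Suc j)
  have "0 < l j"
    using assms(1) Suc.prems(2) by (simp add: ds_valid_def)
  with Suc show ?case
    by (cases "i = Suc j") (auto simp: pt_Suc)
qed simp

lemma pt_index_le:
  assumes "ds_valid m l" "a \<le> 2 * m" "pt l a \<le> x" "x < pt l (Suc b)"
  shows "a \<le> b"
proof (rule ccontr)
  assume "\<not> a \<le> b"
  then have "pt l (Suc b) \<le> pt l a"
    using pt_mono[OF assms(1)] assms(2) by simp
  with assms(3,4) show False by simp
qed

lemma sum_atLeastLessThan_eq_pt_diff: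
  assumes "i \<le> m"
  shows "(\<Sum>j\<in>{i..<m}. l j) = pt l m - pt l i"
  using sum.atLeastLessThan_concat[of 0 i m l] assms by (simp add: pt_def atLeast0LessThan)

lemma sum_atMost_eq_pt_diff: "(\<Sum>j\<le>i. l (m + j)) = pt l (m + Suc i) - pt l m"
  by (induction i) (simp_all add: pt_Suc)

lemma inA_or_inB:
  assumes "ds_valid m l" "0 \<le> x" "x < 1"
  shows "(\<exists>i. inA m l x i) \<or> (\<exists>i. inB m l x i)"
proof -
  have "\<exists>k<N. pt l k \<le> x \<and> x < pt l (Suc k)" if "x < pt l N" for N
    using that
  proof (induction N)
    case (Suc N)
    then show ?case
      by (cases "x < pt l N") (auto intro: less_SucI)
  qed (use assms(2) in simp)
  moreover have "x < pt l (2 * m)"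
    using assms(3) pt_2m[OF assms(1)] by simp
  ultimately obtain k where "k < 2 * m" "pt l k \<le> x" "x < pt l (Suc k)"
    by blast
  then show ?thesis
    unfolding inA_def inB_def
    by (cases "k < m") (auto intro: exI[of _ "k - m"])
qed

lemma inA_not_inB: "ds_valid m l \<Longrightarrow> inA m l x i \<Longrightarrow> \<not> inB m l x j"
  unfolding inA_def inB_def using pt_index_le[of m l "m + j" x i] by auto

lemma inA_unique: "ds_valid m l \<Longrightarrow> inA m l x i \<Longrightarrow> inA m l x j \<Longrightarrow> j = i"
  unfolding inA_def using pt_index_le[of m l i x j] pt_index_le[of m l j x i] by auto

lemma inB_unique: "ds_valid m l \<Longrightarrow> inB m l x i \<Longrightarrow> inB m l x j \<Longrightarrow> j = i"
  unfolding inB_def using pt_index_le[of m l "m + i" x "m + j"] pt_index_le[of m l "m + j" x "m + i"]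
  by auto

lemma ds_T_inA:
  assumes "ds_valid m l" "inA m l x i"
  shows "ds_T m l x = x + (pt l (m + Suc i) - pt l m)"
proof -
  have "(THE i. inA m l x i) = i"
    using inA_unique[OF assms(1)] assms(2) by blast
  with assms(2) show ?thesis
    by (auto simp: ds_T_def sum_atMost_eq_pt_diff)
qed

lemma ds_T_inB:
  assumes "ds_valid m l" "inB m l x i"
  shows "ds_T m l x = x + (pt l i - pt l m)"
proof -
  have "(THE i. inB m l x i) = i"
    using inB_unique[OF assms(1)] assms(2) by blast
  moreover have "\<nexists>j. inA m l x j"
    using inA_not_inB[OF assms(1)] assms(2) by blast
  moreover have "i \<le> m"
    using assms(2) by (simp add: inB_def)
  ultimately show ?thesis
    using assms(2) by (auto simp: ds_T_def sum_atLeastLessThan_eq_pt_diff)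
qed

lemma ds_T_outside: "\<nexists>i. inA m l x i \<Longrightarrow> \<nexists>i. inB m l x i \<Longrightarrow> ds_T m l x = x"
  unfolding ds_T_def by (simp only: if_False)

text \<open>The displacement \<open>0\<close> of points outside \<open>[0,1)\<close> is the case \<open>k = m\<close>.\<close>

lemma ds_T_displacement_in:
  assumes "ds_valid m l"
  shows "ds_T m l x - x \<in> (\<lambda>k. pt l k - pt l m) ` {..2 * m}"
proof -
  consider i where "inA m l x i" | i where "inB m l x i" | "\<nexists>i. inA m l x i" "\<nexists>i. inB m l x i"
    by blast
  then show ?thesis
  proof cases
    case (1 i)
    then show ?thesis
      by (intro image_eqI[of _ _ "m + Suc i"]) (simp_all add: ds_T_inA[OF assms 1] inA_def)
  next
    case (2 i)
    then show ?thesis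
      by (intro image_eqI[of _ _ i]) (simp_all add: ds_T_inB[OF assms 2] inB_def)
  next
    case 3
    then show ?thesis
      by (intro image_eqI[of _ _ m]) (simp_all add: ds_T_outside)
  qed
qed

lemma finite_range_ds_T_displacement:
  assumes "ds_valid m l"
  shows "finite (range (\<lambda>x. ds_T m l x - x))"
proof (rule finite_subset)
  show "range (\<lambda>x. ds_T m l x - x) \<subseteq> (\<lambda>k. pt l k - pt l m) ` {..2 * m}"
    using ds_T_displacement_in[OF assms] by blast
qed simp

lemma ds_T_in_unit_interval:
  assumes "ds_valid m l" "0 \<le> x" "x < 1"
  shows "0 \<le> ds_T m l x \<and> ds_T m l x < 1"
  using inA_or_inB[OF assms]
proof (elim disjE exE)
  fix i
  assume A: "inA m l x i"
  then have "pt l (Suc i) \<le> pt l m" "pt l m \<le> pt l (m + Suc i)" "pt l (m + Suc i) \<le> pt l (2 * m)"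
    using pt_mono[OF assms(1)] by (simp_all add: inA_def)
  then show ?thesis
    using A assms(2) pt_2m[OF assms(1)] by (auto simp: ds_T_inA[OF assms(1)] inA_def)
next
  fix i
  assume B: "inB m l x i"
  then have "0 \<le> pt l i" "pt l i \<le> pt l m" "pt l m \<le> pt l (m + i)"
    using pt_mono[OF assms(1), of 0 i] pt_mono[OF assms(1)] by (simp_all add: inB_def)
  with B assms(3) show ?thesis
    by (auto simp: ds_T_inB[OF assms(1)] inB_def)
qed

lemma funpow_ds_T_in_unit_interval:
  assumes "ds_valid m l" "0 \<le> x" "x < 1"
  shows "0 \<le> (ds_T m l ^^ k) x \<and> (ds_T m l ^^ k) x < 1"
  by (induction k) (simp_all add: assms ds_T_in_unit_interval[OF assms(1)])

lemma ds_T_strict_mono_same_half: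
  assumes "ds_valid m l" "0 \<le> x" "x < y" "y < 1" "x \<in> Bset m l \<longleftrightarrow> y \<in> Bset m l"
  shows "ds_T m l x < ds_T m l y"
proof (cases "y \<in> Bset m l")
  case True
  then obtain i j where B: "inB m l x i" "inB m l y j"
    using assms(5) unfolding Bset_def by blast
  then have "m + i \<le> m + j"
    using pt_index_le[OF assms(1), of "m + i" y "m + j"] assms(3) unfolding inB_def by linarith
  then have "pt l i \<le> pt l j"
    using B pt_mono[OF assms(1), of i j] unfolding inB_def by simp
  with assms(3) show ?thesis
    by (simp add: ds_T_inB[OF assms(1) B(1)] ds_T_inB[OF assms(1) B(2)])
next
  case False
  have "0 \<le> y" "x < 1"
    using assms(2-4) by simp_all
  then obtain i j where A: "inA m l x i" "inA m l y j"
    using False assms(5) inA_or_inB[OF assms(1,2)] inA_or_inB[OF assms(1) _ assms(4)]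
    unfolding Bset_def by blast
  then have "i \<le> j"
    using pt_index_le[OF assms(1), of i y j] assms(3) unfolding inA_def by linarith
  then have "pt l (m + Suc i) \<le> pt l (m + Suc j)"
    using A pt_mono[OF assms(1), of "m + Suc i" "m + Suc j"] unfolding inA_def by simp
  with assms(3) show ?thesis
    by (simp add: ds_T_inA[OF assms(1) A(1)] ds_T_inA[OF assms(1) A(2)])
qed

lemma coding_funpow: "coding m l ((ds_T m l ^^ p) x) k = coding m l x (k + p)"
  by (simp add: coding_def funpow_add)

lemma funpow_ds_T_strict_mono_same_coding:
  assumes "ds_valid m l" "0 \<le> x" "x < y" "y < 1" "coding m l x = coding m l y"
  shows "(ds_T m l ^^ k) x < (ds_T m l ^^ k) y"
proof (induction k)
  case (Suc k)
  have "(ds_T m l ^^ k) x \<in> Bset m l \<longleftrightarrow> (ds_T m l ^^ k) y \<in> Bset m l"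
    using fun_cong[OF assms(5), of k] by (simp add: coding_def split: if_splits)
  with Suc show ?case
    using ds_T_strict_mono_same_half[OF assms(1)] funpow_ds_T_in_unit_interval[OF assms(1,2)]
      funpow_ds_T_in_unit_interval[OF assms(1), of y] assms(2-4)
    by simp
qed (use assms(3) in simp)

lemma finite_range_funpow_displacement:
  fixes f :: "'a \<Rightarrow> 'a::ab_group_add"
  assumes "finite (range (\<lambda>z. f z - z))"
  shows "finite (range (\<lambda>z. (f ^^ n) z - z))"
proof (induction n)
  case (Suc n)
  have "range (\<lambda>z. (f ^^ Suc n) z - z)
      \<subseteq> (\<lambda>(a, b). a + b) ` (range (\<lambda>z. f z - z) \<times> range (\<lambda>z. (f ^^ n) z - z))"
  proof
    fix d
    assume "d \<in> range (\<lambda>z. (f ^^ Suc n) z - z)"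
    then obtain z where "d = (f ((f ^^ n) z) - (f ^^ n) z) + ((f ^^ n) z - z)"
      by auto
    then show "d \<in> (\<lambda>(a, b). a + b) ` (range (\<lambda>z. f z - z) \<times> range (\<lambda>z. (f ^^ n) z - z))"
      by blast
  qed
  moreover have "finite ((\<lambda>(a, b). a + b) ` (range (\<lambda>z. f z - z) \<times> range (\<lambda>z. (f ^^ n) z - z)))"
    using assms Suc.IH by blast
  ultimately show ?case
    by (rule finite_subset)
qed simp

lemma increasing_finite_steps_unbounded:
  fixes X :: "nat \<Rightarrow> real"
  assumes "finite (range (\<lambda>j. X (Suc j) - X j))" "\<And>j. X j < X (Suc j)"
  shows "\<not> bdd_above (range X)"
proof
  assume "bdd_above (range X)"
  then obtain b where b: "\<And>j. X j \<le> b"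
    by (auto simp: bdd_above_def)
  define \<delta> where "\<delta> = Min (range (\<lambda>j. X (Suc j) - X j))"
  have \<delta>_pos: "0 < \<delta>"
    using Min_in[OF assms(1)] assms(2) by (fastforce simp: \<delta>_def)
  have linear_growth: "X j \<ge> X 0 + real j * \<delta>" for j
  proof (induction j)
    case (Suc j)
    have "\<delta> \<le> X (Suc j) - X j"
      using Min_le[OF assms(1)] by (simp add: \<delta>_def)
    with Suc show ?case by (simp add: algebra_simps)
  qed simp
  obtain n where "b - X 0 < real n * \<delta>"
    using reals_Archimedean3[OF \<delta>_pos] by blast
  with linear_growth[of n] b[of n] show False
    by linarith
qed

lemma funpow_ds_T_eq_if_same_coding:
  assumes "ds_valid m l" "0 \<le> x" "x < 1" "coding m l ((ds_T m l ^^ p) x) = coding m l x"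
  shows "(ds_T m l ^^ p) x = x"
proof (rule ccontr)
  assume "(ds_T m l ^^ p) x \<noteq> x"
  define y where "y = (ds_T m l ^^ p) x"
  define X where "X j = (ds_T m l ^^ (j * p)) x" for j
  have X_Suc_eq_orbit_y: "X (Suc j) = (ds_T m l ^^ (j * p)) y" for j
    by (simp add: X_def y_def funpow_add add.commute[of p])
  have X_Suc_eq_funpow: "X (Suc j) = (ds_T m l ^^ p) (X j)" for j
    by (simp add: X_def funpow_add)
  have "range (\<lambda>j. X (Suc j) - X j) \<subseteq> range (\<lambda>z. (ds_T m l ^^ p) z - z)"
    by (auto simp: X_Suc_eq_funpow)
  then have finite_steps: "finite (range (\<lambda>j. X (Suc j) - X j))"
    using finite_range_funpow_displacement[OF finite_range_ds_T_displacement[OF assms(1)]]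
    by (rule finite_subset)
  have X_bounds: "0 \<le> X j" "X j < 1" for j
    using funpow_ds_T_in_unit_interval[OF assms(1-3)] by (simp_all add: X_def)
  have y_bounds: "0 \<le> y" "y < 1"
    using funpow_ds_T_in_unit_interval[OF assms(1-3)] by (simp_all add: y_def)
  have same_coding: "coding m l y = coding m l x"
    using assms(4) by (simp add: y_def)
  consider "x < y" | "y < x"
    using \<open>(ds_T m l ^^ p) x \<noteq> x\<close> y_def by fastforce
  then show False
  proof cases
    case 1
    have "X j < X (Suc j)" for j
      unfolding X_Suc_eq_orbit_y
      using funpow_ds_T_strict_mono_same_coding[OF assms(1,2) 1 y_bounds(2) same_coding[symmetric]]
      by (simp add: X_def)
    with finite_steps have "\<not> bdd_above (range X)"
      by (rule increasing_finite_steps_unbounded)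
    with X_bounds(2) show False
      by (meson bdd_aboveI2 less_imp_le)
  next
    case 2
    have "- X j < - X (Suc j)" for j
      unfolding X_Suc_eq_orbit_y
      using funpow_ds_T_strict_mono_same_coding[OF assms(1) y_bounds(1) 2 assms(3) same_coding]
      by (simp add: X_def)
    moreover have "finite (range (\<lambda>j. - X (Suc j) - - X j))"
      using finite_imageI[OF finite_steps, of uminus] by (simp add: image_image)
    ultimately have "\<not> bdd_above (range (\<lambda>j. - X j))"
      by (rule increasing_finite_steps_unbounded[rotated])
    with X_bounds(1) show False
      by (meson bdd_aboveI2 neg_le_0_iff_le)
  qed
qed

lemma coding_periodic_iff_funpow_fixed:
  assumes "ds_valid m l" "0 \<le> x" "x < 1"
  shows "(\<forall>k. coding m l x (k + p) = coding m l x k) \<longleftrightarrow> (ds_T m l ^^ p) x = x"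
  using funpow_ds_T_eq_if_same_coding[OF assms, of p] coding_funpow[of m l p x]
  by (metis ext)

theorem lemma4:
  fixes m n :: nat and l :: "nat \<Rightarrow> real" and x :: real
  assumes "ds_valid m l" and "0 \<le> x" and "x < 1"
  shows "periodic_pt_min (ds_T m l) x n \<longleftrightarrow> periodic_seq_min (coding m l x) n"
  using coding_periodic_iff_funpow_fixed[OF assms]
  unfolding periodic_pt_min_def periodic_seq_min_def by auto

end
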